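(* Let $\ell$ be a kernel on a set $X$ with the multiplier separation property. Then $\ell$ has the automatic separation property.
   Context: A kernel on $X$ is a positive semi-definite function $\ell:X\times X\to\mathbb{C}$ (with $\ell_z\ne0$ for all $z$); $\mathcal{H}_\ell$ its reproducing kernel Hilbert space, $\ell_w=\ell(\cdot,w)$, $\hat\ell_w=\ell_w/\|\ell_w\|$, $d_\ell(z,w)=\sqrt{1-|\langle\hat\ell_z,\hat\ell_w\rangle|^2}$. $\mathrm{Mult}(\mathcal{H}_\ell)$ is the algebra of functions $\phi$ with $f\mapsto\phi f$ bounded on $\mathcal{H}_\ell$, normed by the operator norm. $\ell$ has the multiplier separation property if for every $\delta>0$ there is $\epsilon>0$ such that for any two points $\lambda\ne\mu$ in $X$ with $d_\ell(\lambda,\mu)>\delta$ there is $\phi\in\mathrm{Mult}(\mathcal{H}_\ell)$ of norm at most $1$ with $\phi(\lambda)=\epsilon$ and $\phi(\mu)=0$. A sequence $\{\lambda_i\}$ is weakly separated by $\ell$ if $d_\ell(\lambda_i,\lambda_j)\ge\epsilon>0$ for $i\ne j$; for $n\ge2$ it is $n$-weakly separated by $\ell$ if there is $\epsilon>0$ such that for every $n$-point subset $\{\mu_1,\dots,\mu_n\}$ of it, $\mathrm{dist}(\hat\ell_{\mu_1},\mathrm{span}\{\hat\ell_{\mu_2},\dots,\hat\ell_{\mu_n}\})\ge\epsilon$. $\ell$ has the automatic separation property if every sequence weakly separated by $\ell$ is $n$-weakly separated by $\ell$ for every $n\ge3$. *)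

theory Defs
  imports Complex_Main
begin

text \<open>Functions on a set X are modelled as functions on a type 'x (X = UNIV).
  The RKHS is represented concretely as a set H of functions 'x \<Rightarrow> complex
  together with an inner product ip (linear in the first argument).\<close>

definition kernel :: "('x \<Rightarrow> 'x \<Rightarrow> complex) \<Rightarrow> bool" where
  "kernel l \<longleftrightarrow>
     (\<forall>(F::'x set) (c::'x \<Rightarrow> complex). finite F \<longrightarrow>
        (\<Sum>x\<in>F. \<Sum>y\<in>F. c x * cnj (c y) * l x y) \<in> \<real> \<and>
        Re (\<Sum>x\<in>F. \<Sum>y\<in>F. c x * cnj (c y) * l x y) \<ge> 0)
   \<and> (\<forall>z. (\<lambda>x. l x z) \<noteq> (\<lambda>_. 0))"

definition hnorm :: "(('x \<Rightarrow> complex) \<Rightarrow> ('x \<Rightarrow> complex) \<Rightarrow> complex) \<Rightarrow> ('x \<Rightarrow> complex) \<Rightarrow> real" where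
  "hnorm ip f = sqrt (Re (ip f f))"

definition is_rkhs ::
  "('x \<Rightarrow> 'x \<Rightarrow> complex) \<Rightarrow> ('x \<Rightarrow> complex) set
     \<Rightarrow> (('x \<Rightarrow> complex) \<Rightarrow> ('x \<Rightarrow> complex) \<Rightarrow> complex) \<Rightarrow> bool" where
  "is_rkhs l H ip \<longleftrightarrow>
     (\<lambda>_. 0) \<in> H
   \<and> (\<forall>f\<in>H. \<forall>g\<in>H. (\<lambda>x. f x + g x) \<in> H)
   \<and> (\<forall>f\<in>H. \<forall>a. (\<lambda>x. a * f x) \<in> H)
   \<and> (\<forall>f\<in>H. \<forall>g\<in>H. \<forall>h\<in>H. ip (\<lambda>x. f x + g x) h = ip f h + ip g h)
   \<and> (\<forall>f\<in>H. \<forall>g\<in>H. \<forall>a. ip (\<lambda>x. a * f x) g = a * ip f g)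
   \<and> (\<forall>f\<in>H. \<forall>g\<in>H. ip g f = cnj (ip f g))
   \<and> (\<forall>f\<in>H. Re (ip f f) \<ge> 0)
   \<and> (\<forall>f\<in>H. ip f f = 0 \<longrightarrow> f = (\<lambda>_. 0))
   \<and> (\<forall>s::nat \<Rightarrow> ('x \<Rightarrow> complex). (\<forall>n. s n \<in> H) \<longrightarrow>
        (\<forall>e>0. \<exists>N. \<forall>m\<ge>N. \<forall>n\<ge>N. hnorm ip (\<lambda>x. s m x - s n x) < e) \<longrightarrow>
        (\<exists>g\<in>H. (\<lambda>n. hnorm ip (\<lambda>x. s n x - g x)) \<longlonglongrightarrow> 0))
   \<and> (\<forall>w. (\<lambda>x. l x w) \<in> H)
   \<and> (\<forall>f\<in>H. \<forall>w. ip f (\<lambda>x. l x w) = f w)"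

definition khat :: "('x \<Rightarrow> 'x \<Rightarrow> complex) \<Rightarrow> (('x \<Rightarrow> complex) \<Rightarrow> ('x \<Rightarrow> complex) \<Rightarrow> complex)
    \<Rightarrow> 'x \<Rightarrow> ('x \<Rightarrow> complex)" where
  "khat l ip w = (\<lambda>x. l x w / complex_of_real (hnorm ip (\<lambda>y. l y w)))"

definition dker :: "('x \<Rightarrow> 'x \<Rightarrow> complex) \<Rightarrow> (('x \<Rightarrow> complex) \<Rightarrow> ('x \<Rightarrow> complex) \<Rightarrow> complex)
    \<Rightarrow> 'x \<Rightarrow> 'x \<Rightarrow> real" where
  "dker l ip z w = sqrt (1 - (cmod (ip (khat l ip z) (khat l ip w)))\<^sup>2)"

definition is_multiplier :: "('x \<Rightarrow> complex) set \<Rightarrow> (('x \<Rightarrow> complex) \<Rightarrow> ('x \<Rightarrow> complex) \<Rightarrow> complex)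
    \<Rightarrow> ('x \<Rightarrow> complex) \<Rightarrow> bool" where
  "is_multiplier H ip \<phi> \<longleftrightarrow>
     (\<forall>f\<in>H. (\<lambda>x. \<phi> x * f x) \<in> H) \<and>
     (\<exists>C. \<forall>f\<in>H. hnorm ip (\<lambda>x. \<phi> x * f x) \<le> C * hnorm ip f)"

definition mult_norm :: "('x \<Rightarrow> complex) set \<Rightarrow> (('x \<Rightarrow> complex) \<Rightarrow> ('x \<Rightarrow> complex) \<Rightarrow> complex)
    \<Rightarrow> ('x \<Rightarrow> complex) \<Rightarrow> real" where
  "mult_norm H ip \<phi> = Sup {hnorm ip (\<lambda>x. \<phi> x * f x) | f. f \<in> H \<and> hnorm ip f \<le> 1}"

definition multiplier_separation :: "('x \<Rightarrow> 'x \<Rightarrow> complex) \<Rightarrow> ('x \<Rightarrow> complex) set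
    \<Rightarrow> (('x \<Rightarrow> complex) \<Rightarrow> ('x \<Rightarrow> complex) \<Rightarrow> complex) \<Rightarrow> bool" where
  "multiplier_separation l H ip \<longleftrightarrow>
     (\<forall>\<delta>>0. \<exists>\<epsilon>>0. \<forall>la mu. la \<noteq> mu \<and> dker l ip la mu > \<delta> \<longrightarrow>
        (\<exists>\<phi>. is_multiplier H ip \<phi> \<and> mult_norm H ip \<phi> \<le> 1 \<and>
              \<phi> la = complex_of_real \<epsilon> \<and> \<phi> mu = 0))"

definition dist_span :: "(('x \<Rightarrow> complex) \<Rightarrow> ('x \<Rightarrow> complex) \<Rightarrow> complex) \<Rightarrow> ('x \<Rightarrow> complex)
    \<Rightarrow> ('b \<Rightarrow> ('x \<Rightarrow> complex)) \<Rightarrow> 'b set \<Rightarrow> real" where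
  "dist_span ip u g A =
     Inf {hnorm ip (\<lambda>x. u x - (\<Sum>\<nu>\<in>A. c \<nu> * g \<nu> x)) | c :: 'b \<Rightarrow> complex. True}"

definition weakly_separated :: "('x \<Rightarrow> 'x \<Rightarrow> complex) \<Rightarrow> (('x \<Rightarrow> complex) \<Rightarrow> ('x \<Rightarrow> complex) \<Rightarrow> complex)
    \<Rightarrow> (nat \<Rightarrow> 'x) \<Rightarrow> bool" where
  "weakly_separated l ip s \<longleftrightarrow>
     (\<exists>\<epsilon>>0. \<forall>i j. i \<noteq> j \<longrightarrow> dker l ip (s i) (s j) \<ge> \<epsilon>)"

definition n_weakly_separated :: "nat \<Rightarrow> ('x \<Rightarrow> 'x \<Rightarrow> complex) \<Rightarrow> (('x \<Rightarrow> complex) \<Rightarrow> ('x \<Rightarrow> complex) \<Rightarrow> complex)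
    \<Rightarrow> (nat \<Rightarrow> 'x) \<Rightarrow> bool" where
  "n_weakly_separated n l ip s \<longleftrightarrow>
     (\<exists>\<epsilon>>0. \<forall>S. S \<subseteq> range s \<and> finite S \<and> card S = n \<longrightarrow>
        (\<forall>\<mu>\<in>S. dist_span ip (khat l ip \<mu>) (khat l ip) (S - {\<mu>}) \<ge> \<epsilon>))"

definition automatic_separation :: "('x \<Rightarrow> 'x \<Rightarrow> complex) \<Rightarrow> (('x \<Rightarrow> complex) \<Rightarrow> ('x \<Rightarrow> complex) \<Rightarrow> complex) \<Rightarrow> bool" where
  "automatic_separation l ip \<longleftrightarrow>
     (\<forall>s::nat \<Rightarrow> 'x. weakly_separated l ip s \<longrightarrow> (\<forall>n\<ge>3. n_weakly_separated n l ip s))"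

end

theory Submission
  imports Defs
begin

text \<open>Let \<open>s\<close> be weakly separated, \<open>S\<close> an \<open>n\<close>-point subset of its range and \<open>\<mu> \<in> S\<close>.
  Multiplier separation yields, for every \<open>\<nu> \<in> S - {\<mu>}\<close>, a contractive multiplier \<open>\<phi>\<^sub>\<nu>\<close> with
  \<open>\<phi>\<^sub>\<nu>(\<mu>) = \<epsilon>\<close> and \<open>\<phi>\<^sub>\<nu>(\<nu>) = 0\<close>, where \<open>\<epsilon>\<close> depends only on the separation constant.
  The product \<open>\<psi>\<close> of these is again contractive, vanishes on \<open>S - {\<mu>}\<close> and has \<open>\<psi>(\<mu>) = \<epsilon>\<^sup>n\<^sup>-\<^sup>1\<close>.
  The function \<open>\<psi> \<ell>\<^sub>\<mu>\<close> is orthogonal to every \<open>\<ell>\<^sub>\<nu>\<close> with \<open>\<nu> \<in> S - {\<mu>}\<close>, has norm at most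
  \<open>\<parallel>\<ell>\<^sub>\<mu>\<parallel>\<close>, and its inner product with \<open>\<hat>\<ell>\<^sub>\<mu>\<close> is \<open>\<psi>(\<mu>) \<parallel>\<ell>\<^sub>\<mu>\<parallel>\<close>; Cauchy-Schwarz then
  bounds the distance from \<open>\<hat>\<ell>\<^sub>\<mu>\<close> to the span of the other \<open>\<hat>\<ell>\<^sub>\<nu>\<close> below by \<open>\<epsilon>\<^sup>n\<^sup>-\<^sup>1\<close>.\<close>

definition contractive_multiplier ::
  "('x \<Rightarrow> complex) set \<Rightarrow> (('x \<Rightarrow> complex) \<Rightarrow> ('x \<Rightarrow> complex) \<Rightarrow> complex) \<Rightarrow> ('x \<Rightarrow> complex) \<Rightarrow> bool"
  where "contractive_multiplier H ip \<phi> \<longleftrightarrow>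
    (\<forall>f\<in>H. (\<lambda>x. \<phi> x * f x) \<in> H \<and> hnorm ip (\<lambda>x. \<phi> x * f x) \<le> hnorm ip f)"

lemma dist_span_ge:
  assumes "\<And>c. r \<le> hnorm ip (\<lambda>x. u x - (\<Sum>\<nu>\<in>A. c \<nu> * g \<nu> x))"
  shows "r \<le> dist_span ip u g A"
  unfolding dist_span_def by (rule cInf_greatest) (use assms in auto)

locale rkhs =
  fixes l :: "'x \<Rightarrow> 'x \<Rightarrow> complex" and H :: "('x \<Rightarrow> complex) set"
    and ip :: "('x \<Rightarrow> complex) \<Rightarrow> ('x \<Rightarrow> complex) \<Rightarrow> complex"
  assumes is_rkhs: "is_rkhs l H ip"
    and kernel_fun_nonzero: "(\<lambda>x. l x w) \<noteq> (\<lambda>_. 0)"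
begin

lemma zero_in_H: "(\<lambda>_. 0) \<in> H"
  using is_rkhs unfolding is_rkhs_def by blast

lemma add_in_H: "f \<in> H \<Longrightarrow> g \<in> H \<Longrightarrow> (\<lambda>x. f x + g x) \<in> H"
  using is_rkhs unfolding is_rkhs_def by blast

lemma scale_in_H: "f \<in> H \<Longrightarrow> (\<lambda>x. a * f x) \<in> H"
  using is_rkhs unfolding is_rkhs_def by blast

lemma inner_add_left: "f \<in> H \<Longrightarrow> g \<in> H \<Longrightarrow> h \<in> H \<Longrightarrow> ip (\<lambda>x. f x + g x) h = ip f h + ip g h"
  using is_rkhs unfolding is_rkhs_def by blast

lemma inner_scale_left: "f \<in> H \<Longrightarrow> g \<in> H \<Longrightarrow> ip (\<lambda>x. a * f x) g = a * ip f g"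
  using is_rkhs unfolding is_rkhs_def by blast

lemma inner_commute: "f \<in> H \<Longrightarrow> g \<in> H \<Longrightarrow> ip g f = cnj (ip f g)"
  using is_rkhs unfolding is_rkhs_def by blast

lemma inner_self_nonneg: "f \<in> H \<Longrightarrow> Re (ip f f) \<ge> 0"
  using is_rkhs unfolding is_rkhs_def by blast

lemma inner_self_eq_zero: "f \<in> H \<Longrightarrow> ip f f = 0 \<Longrightarrow> f = (\<lambda>_. 0)"
  using is_rkhs unfolding is_rkhs_def by blast

lemma kernel_fun_in_H: "(\<lambda>x. l x w) \<in> H"
  using is_rkhs unfolding is_rkhs_def by blast

lemma reproducing: "f \<in> H \<Longrightarrow> ip f (\<lambda>x. l x w) = f w"
  using is_rkhs unfolding is_rkhs_def by blast

lemma diff_in_H: "f \<in> H \<Longrightarrow> g \<in> H \<Longrightarrow> (\<lambda>x. f x - g x) \<in> H"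
  using add_in_H[of f "\<lambda>x. (-1) * g x"] scale_in_H[of g "-1"] by simp

lemma sum_in_H: "finite A \<Longrightarrow> (\<And>\<nu>. \<nu> \<in> A \<Longrightarrow> g \<nu> \<in> H) \<Longrightarrow> (\<lambda>x. \<Sum>\<nu>\<in>A. c \<nu> * g \<nu> x) \<in> H"
  by (induction A rule: finite_induct) (simp_all add: zero_in_H add_in_H scale_in_H)

lemma inner_diff_left:
  assumes "f \<in> H" "g \<in> H" "h \<in> H"
  shows "ip (\<lambda>x. f x - g x) h = ip f h - ip g h"
  using inner_add_left[OF assms(1) scale_in_H[OF assms(2)] assms(3), of "-1"]
    inner_scale_left[OF assms(2,3), of "-1"] by simp

lemma inner_add_right:
  assumes "f \<in> H" "g \<in> H" "h \<in> H"
  shows "ip h (\<lambda>x. f x + g x) = ip h f + ip h g"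
  using inner_commute[OF add_in_H[OF assms(1,2)] assms(3)] inner_add_left[OF assms]
    inner_commute[OF assms(1,3)] inner_commute[OF assms(2,3)] by simp

lemma inner_scale_right:
  assumes "f \<in> H" "g \<in> H"
  shows "ip g (\<lambda>x. a * f x) = cnj a * ip g f"
  using inner_commute[OF scale_in_H[OF assms(1)] assms(2)] inner_scale_left[OF assms]
    inner_commute[OF assms] by simp

lemma inner_diff_right:
  assumes "f \<in> H" "g \<in> H" "h \<in> H"
  shows "ip h (\<lambda>x. f x - g x) = ip h f - ip h g"
  using inner_commute[OF diff_in_H[OF assms(1,2)] assms(3)] inner_diff_left[OF assms]
    inner_commute[OF assms(1,3)] inner_commute[OF assms(2,3)] by simp

lemma inner_zero_right: "u \<in> H \<Longrightarrow> ip u (\<lambda>_. 0) = 0"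
  using inner_scale_right[OF zero_in_H, of u 0] by simp

lemma inner_sum_right:
  "finite A \<Longrightarrow> (\<And>\<nu>. \<nu> \<in> A \<Longrightarrow> g \<nu> \<in> H) \<Longrightarrow> u \<in> H \<Longrightarrow>
   ip u (\<lambda>x. \<Sum>\<nu>\<in>A. c \<nu> * g \<nu> x) = (\<Sum>\<nu>\<in>A. cnj (c \<nu>) * ip u (g \<nu>))"
proof (induction A rule: finite_induct)
  case empty
  then show ?case by (simp add: inner_zero_right)
next
  case (insert a A)
  have "ip u (\<lambda>x. \<Sum>\<nu>\<in>insert a A. c \<nu> * g \<nu> x)
      = ip u (\<lambda>x. c a * g a x + (\<Sum>\<nu>\<in>A. c \<nu> * g \<nu> x))"
    using insert.hyps by simp
  also have "\<dots> = cnj (c a) * ip u (g a) + ip u (\<lambda>x. \<Sum>\<nu>\<in>A. c \<nu> * g \<nu> x)"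
    using insert.prems
    by (simp add: inner_add_right scale_in_H sum_in_H[OF insert.hyps(1)] inner_scale_right)
  finally show ?case
    using insert by simp
qed

lemma inner_self_real:
  assumes "f \<in> H"
  shows "ip f f = complex_of_real (Re (ip f f))"
proof -
  have "Im (ip f f) = - Im (ip f f)"
    using arg_cong[where f = Im, OF inner_commute[OF assms assms]] by simp
  then show ?thesis
    by (simp add: complex_eq_iff)
qed

lemma hnorm_nonneg: "f \<in> H \<Longrightarrow> hnorm ip f \<ge> 0"
  unfolding hnorm_def using inner_self_nonneg by simp

lemma hnorm_eq_zero:
  assumes "f \<in> H" "hnorm ip f = 0"
  shows "f = (\<lambda>_. 0)"
proof -
  have "Re (ip f f) = 0"
    using assms(2) unfolding hnorm_def by simp
  then have "ip f f = 0"
    using inner_self_real[OF assms(1)] by simp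
  then show ?thesis
    using inner_self_eq_zero[OF assms(1)] by blast
qed

lemma hnorm_zero: "hnorm ip (\<lambda>_. 0) = 0"
  unfolding hnorm_def using inner_zero_right[OF zero_in_H] by simp

lemma hnorm_scale:
  assumes "f \<in> H"
  shows "hnorm ip (\<lambda>x. a * f x) = cmod a * hnorm ip f"
proof -
  have "ip (\<lambda>x. a * f x) (\<lambda>x. a * f x) = a * (cnj a * ip f f)"
    using inner_scale_left[OF assms scale_in_H[OF assms]] inner_scale_right[OF assms assms] by simp
  also have "\<dots> = complex_of_real ((cmod a)\<^sup>2) * ip f f"
    by (metis complex_norm_square mult.assoc)
  finally show ?thesis
    unfolding hnorm_def by (simp add: real_sqrt_mult)
qed

lemma cauchy_schwarz:
  assumes f: "f \<in> H" and g: "g \<in> H"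
  shows "cmod (ip f g) \<le> hnorm ip f * hnorm ip g"
proof (cases "ip g g = 0")
  case True
  then show ?thesis
    using inner_self_eq_zero[OF g] inner_zero_right[OF f] by (simp add: hnorm_def)
next
  case False
  define r where "r = Re (ip g g)"
  have gg: "ip g g = complex_of_real r"
    unfolding r_def by (rule inner_self_real[OF g])
  have r: "r > 0"
    using False gg inner_self_nonneg[OF g] r_def by (metis of_real_0 order_le_less)
  define a where "a = ip f g"
  define t where "t = a / complex_of_real r"
  define h where "h = (\<lambda>x. f x - t * g x)"
  \<comment> \<open>\<open>h\<close> is \<open>f\<close> minus its projection onto \<open>g\<close>, so \<open>0 \<le> \<langle>h, h\<rangle> = \<parallel>f\<parallel>\<^sup>2 - |\<langle>f, g\<rangle>|\<^sup>2 / \<parallel>g\<parallel>\<^sup>2\<close>.\<close>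
  have tg: "(\<lambda>x. t * g x) \<in> H"
    using scale_in_H g by blast
  have h: "h \<in> H"
    unfolding h_def using diff_in_H f tg by blast
  have "ip h h = ip f h - t * ip g h"
    unfolding h_def using inner_diff_left[OF f tg h] inner_scale_left[OF g h] unfolding h_def by simp
  also have "ip f h = ip f f - cnj t * a"
    unfolding h_def using inner_diff_right[OF f tg f] inner_scale_right[OF g f] a_def by simp
  also have "ip g h = cnj a - cnj t * complex_of_real r"
    unfolding h_def using inner_diff_right[OF f tg g] inner_scale_right[OF g g] a_def gg inner_commute[OF f g]
    by simp
  also have "ip f f - cnj t * a - t * (cnj a - cnj t * complex_of_real r) = ip f f - a * cnj a / complex_of_real r"
    using r unfolding t_def by (simp add: field_simps)
  also have "a * cnj a / complex_of_real r = complex_of_real ((cmod a)\<^sup>2 / r)"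
    by (metis complex_norm_square of_real_divide)
  finally have "0 \<le> Re (ip f f) - (cmod a)\<^sup>2 / r"
    using inner_self_nonneg[OF h] by simp
  then have "(cmod a)\<^sup>2 \<le> Re (ip f f) * r"
    using r by (simp add: field_simps)
  then have "sqrt ((cmod a)\<^sup>2) \<le> sqrt (Re (ip f f) * r)"
    using real_sqrt_le_mono by blast
  then show ?thesis
    unfolding hnorm_def a_def r_def by (simp add: real_sqrt_mult)
qed

lemma hnorm_mult_le_mult_norm:
  assumes m: "is_multiplier H ip \<phi>" and f: "f \<in> H" "hnorm ip f \<le> 1"
  shows "hnorm ip (\<lambda>x. \<phi> x * f x) \<le> mult_norm H ip \<phi>"
proof -
  obtain C where C: "\<And>f. f \<in> H \<Longrightarrow> hnorm ip (\<lambda>x. \<phi> x * f x) \<le> C * hnorm ip f"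
    using m unfolding is_multiplier_def by blast
  have "bdd_above {hnorm ip (\<lambda>x. \<phi> x * f x) | f. f \<in> H \<and> hnorm ip f \<le> 1}"
  proof (rule bdd_aboveI[of _ "max C 0"])
    fix y assume "y \<in> {hnorm ip (\<lambda>x. \<phi> x * f x) | f. f \<in> H \<and> hnorm ip f \<le> 1}"
    then obtain g where g: "g \<in> H" "hnorm ip g \<le> 1" and y: "y = hnorm ip (\<lambda>x. \<phi> x * g x)"
      by blast
    have "y \<le> C * hnorm ip g"
      unfolding y by (rule C[OF g(1)])
    also have "\<dots> \<le> max C 0 * hnorm ip g"
      by (rule mult_right_mono[OF max.cobounded1 hnorm_nonneg[OF g(1)]])
    also have "\<dots> \<le> max C 0"
      by (rule mult_left_le[OF g(2)]) simp
    finally show "y \<le> max C 0" .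
  qed
  then show ?thesis
    unfolding mult_norm_def using f by (intro cSup_upper) auto
qed

lemma contractive_multiplier_if_mult_norm_le_1:
  assumes m: "is_multiplier H ip \<phi>" and n1: "mult_norm H ip \<phi> \<le> 1"
  shows "contractive_multiplier H ip \<phi>"
  unfolding contractive_multiplier_def
proof (intro ballI conjI)
  fix h assume h: "h \<in> H"
  have mH: "\<And>f. f \<in> H \<Longrightarrow> (\<lambda>x. \<phi> x * f x) \<in> H"
    using m unfolding is_multiplier_def by blast
  then show "(\<lambda>x. \<phi> x * h x) \<in> H"
    using h .
  define t where "t = hnorm ip h"
  show "hnorm ip (\<lambda>x. \<phi> x * h x) \<le> hnorm ip h"
  proof (cases "t = 0")
    case True
    then have "h = (\<lambda>_. 0)"
      using hnorm_eq_zero[OF h] unfolding t_def by blast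
    then show ?thesis
      by (simp add: hnorm_zero)
  next
    case False
    then have t: "t > 0"
      using hnorm_nonneg[OF h] unfolding t_def by linarith
    define f where "f = (\<lambda>x. complex_of_real (inverse t) * h x)"
    have f: "f \<in> H"
      unfolding f_def using scale_in_H h .
    have "hnorm ip f = 1"
      unfolding f_def hnorm_scale[OF h] t_def[symmetric] using t by (simp add: norm_inverse)
    then have "hnorm ip (\<lambda>x. \<phi> x * f x) \<le> 1"
      using hnorm_mult_le_mult_norm[OF m f] n1 by simp
    moreover have "(\<lambda>x. \<phi> x * h x) = (\<lambda>x. complex_of_real t * (\<phi> x * f x))"
      unfolding f_def using t by (simp add: field_simps)
    then have "hnorm ip (\<lambda>x. \<phi> x * h x) = t * hnorm ip (\<lambda>x. \<phi> x * f x)"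
      using hnorm_scale[OF mH[OF f], of "complex_of_real t"] t by simp
    ultimately show ?thesis
      using t unfolding t_def by (simp add: mult_left_le)
  qed
qed

lemma contractive_multiplier_prod:
  assumes "finite B" "\<And>\<nu>. \<nu> \<in> B \<Longrightarrow> contractive_multiplier H ip (\<Phi> \<nu>)"
  shows "contractive_multiplier H ip (\<lambda>x. \<Prod>\<nu>\<in>B. \<Phi> \<nu> x)"
  using assms
proof (induction B rule: finite_induct)
  case empty
  then show ?case
    unfolding contractive_multiplier_def by simp
next
  case (insert a B)
  show ?case
    unfolding contractive_multiplier_def
  proof
    fix f assume f: "f \<in> H"
    define g where "g = (\<lambda>x. (\<Prod>\<nu>\<in>B. \<Phi> \<nu> x) * f x)"
    have g: "g \<in> H" "hnorm ip g \<le> hnorm ip f"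
      using insert f unfolding g_def contractive_multiplier_def by auto
    have "(\<lambda>x. \<Phi> a x * g x) \<in> H \<and> hnorm ip (\<lambda>x. \<Phi> a x * g x) \<le> hnorm ip g"
      using insert.prems g(1) unfolding contractive_multiplier_def by blast
    moreover have "(\<lambda>x. (\<Prod>\<nu>\<in>insert a B. \<Phi> \<nu> x) * f x) = (\<lambda>x. \<Phi> a x * g x)"
      unfolding g_def using insert.hyps by (simp add: mult.assoc)
    ultimately show "(\<lambda>x. (\<Prod>\<nu>\<in>insert a B. \<Phi> \<nu> x) * f x) \<in> H \<and>
        hnorm ip (\<lambda>x. (\<Prod>\<nu>\<in>insert a B. \<Phi> \<nu> x) * f x) \<le> hnorm ip f"
      using g(2) by auto
  qed
qed

lemma kernel_fun_hnorm_pos: "hnorm ip (\<lambda>y. l y w) > 0"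
proof -
  have "hnorm ip (\<lambda>y. l y w) \<noteq> 0"
    using hnorm_eq_zero[OF kernel_fun_in_H] kernel_fun_nonzero by blast
  then show ?thesis
    using hnorm_nonneg[OF kernel_fun_in_H, of w] by linarith
qed

lemma kernel_diag: "l w w = complex_of_real ((hnorm ip (\<lambda>y. l y w))\<^sup>2)"
  using reproducing[OF kernel_fun_in_H, of w w] inner_self_real[OF kernel_fun_in_H, of w]
    inner_self_nonneg[OF kernel_fun_in_H, of w]
  unfolding hnorm_def by simp

lemma khat_eq: "khat l ip w = (\<lambda>x. complex_of_real (inverse (hnorm ip (\<lambda>y. l y w))) * l x w)"
  unfolding khat_def by (auto simp: divide_inverse mult.commute)

lemma khat_in_H: "khat l ip w \<in> H"
  unfolding khat_eq using scale_in_H kernel_fun_in_H by blast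

lemma inner_mult_kernel_khat:
  assumes "(\<lambda>x. \<psi> x * l x \<mu>) \<in> H"
  shows "ip (\<lambda>x. \<psi> x * l x \<mu>) (khat l ip w)
    = complex_of_real (inverse (hnorm ip (\<lambda>y. l y w))) * (\<psi> w * l w \<mu>)"
  unfolding khat_eq using inner_scale_right[OF kernel_fun_in_H assms] reproducing[OF assms] by simp

lemma contractive_multiplier_le_dist_span:
  assumes \<psi>: "contractive_multiplier H ip \<psi>"
    and A: "finite A" and vanish: "\<And>\<nu>. \<nu> \<in> A \<Longrightarrow> \<psi> \<nu> = 0"
  shows "cmod (\<psi> \<mu>) \<le> dist_span ip (khat l ip \<mu>) (khat l ip) A"
proof (rule dist_span_ge)
  fix c :: "'x \<Rightarrow> complex"
  define N where "N = hnorm ip (\<lambda>y. l y \<mu>)"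
  define u where "u = (\<lambda>x. \<psi> x * l x \<mu>)"
  define g where "g = (\<lambda>x. khat l ip \<mu> x - (\<Sum>\<nu>\<in>A. c \<nu> * khat l ip \<nu> x))"
  have N: "N > 0"
    unfolding N_def by (rule kernel_fun_hnorm_pos)
  have u: "u \<in> H" "hnorm ip u \<le> N"
    using \<psi> kernel_fun_in_H unfolding u_def N_def contractive_multiplier_def by auto
  have span: "(\<lambda>x. \<Sum>\<nu>\<in>A. c \<nu> * khat l ip \<nu> x) \<in> H"
    using sum_in_H[OF A] khat_in_H by blast
  have g: "g \<in> H"
    unfolding g_def using diff_in_H[OF khat_in_H span] .
  have "ip u g = ip u (khat l ip \<mu>) - (\<Sum>\<nu>\<in>A. cnj (c \<nu>) * ip u (khat l ip \<nu>))"
    unfolding g_def inner_diff_right[OF khat_in_H span u(1)]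
    using inner_sum_right[OF A _ u(1), of "khat l ip" c] khat_in_H by simp
  also have "(\<Sum>\<nu>\<in>A. cnj (c \<nu>) * ip u (khat l ip \<nu>)) = 0"
    using vanish u(1) unfolding u_def by (simp add: inner_mult_kernel_khat)
  also have "ip u (khat l ip \<mu>) = \<psi> \<mu> * complex_of_real N"
    using u(1) N unfolding u_def N_def
    by (simp add: inner_mult_kernel_khat kernel_diag[of \<mu>] power2_eq_square field_simps)
  finally have "cmod (\<psi> \<mu>) * N = cmod (ip u g)"
    using N by (simp add: norm_mult)
  also have "\<dots> \<le> hnorm ip u * hnorm ip g"
    by (rule cauchy_schwarz[OF u(1) g])
  also have "\<dots> \<le> N * hnorm ip g"
    using u(2) hnorm_nonneg[OF g] by (simp add: mult_right_mono)
  finally show "cmod (\<psi> \<mu>) \<le> hnorm ip (\<lambda>x. khat l ip \<mu> x - (\<Sum>\<nu>\<in>A. c \<nu> * khat l ip \<nu> x))"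
    using N unfolding g_def by (simp add: mult.commute)
qed

lemma power_le_dist_span:
  assumes A: "finite A" and \<epsilon>: "\<epsilon> \<ge> 0"
    and sep: "\<And>\<nu>. \<nu> \<in> A \<Longrightarrow> \<exists>\<phi>. is_multiplier H ip \<phi> \<and> mult_norm H ip \<phi> \<le> 1 \<and>
                 \<phi> \<mu> = complex_of_real \<epsilon> \<and> \<phi> \<nu> = 0"
  shows "\<epsilon> ^ card A \<le> dist_span ip (khat l ip \<mu>) (khat l ip) A"
proof -
  obtain \<Phi> where \<Phi>: "\<And>\<nu>. \<nu> \<in> A \<Longrightarrow> is_multiplier H ip (\<Phi> \<nu>) \<and> mult_norm H ip (\<Phi> \<nu>) \<le> 1 \<and>
      \<Phi> \<nu> \<mu> = complex_of_real \<epsilon> \<and> \<Phi> \<nu> \<nu> = 0"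
    using sep by metis
  define \<psi> where "\<psi> = (\<lambda>x. \<Prod>\<nu>\<in>A. \<Phi> \<nu> x)"
  have "contractive_multiplier H ip \<psi>"
    unfolding \<psi>_def using A \<Phi> by (intro contractive_multiplier_prod contractive_multiplier_if_mult_norm_le_1) auto
  moreover have "\<And>\<nu>. \<nu> \<in> A \<Longrightarrow> \<psi> \<nu> = 0"
    unfolding \<psi>_def using A \<Phi> by (metis prod_zero_iff)
  moreover have "cmod (\<psi> \<mu>) = \<epsilon> ^ card A"
    unfolding \<psi>_def using \<Phi> \<epsilon> by (simp add: norm_power)
  ultimately show ?thesis
    using contractive_multiplier_le_dist_span[OF _ A] by metis
qed

lemma weakly_separated_power_le_dist_span:
  assumes "multiplier_separation l H ip" and "weakly_separated l ip s"
  shows "\<exists>\<epsilon>>0. \<forall>S \<mu>. S \<subseteq> range s \<and> finite S \<and> \<mu> \<in> S \<longrightarrow>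
           \<epsilon> ^ card (S - {\<mu>}) \<le> dist_span ip (khat l ip \<mu>) (khat l ip) (S - {\<mu>})"
proof -
  obtain \<delta> where "\<delta> > 0" and \<delta>: "\<And>i j. i \<noteq> j \<Longrightarrow> dker l ip (s i) (s j) \<ge> \<delta>"
    using assms(2) unfolding weakly_separated_def by blast
  have "\<delta> / 2 > 0"
    using \<open>\<delta> > 0\<close> by simp
  then obtain \<epsilon> where "\<epsilon> > 0" and \<epsilon>: "\<forall>x y. x \<noteq> y \<and> dker l ip x y > \<delta> / 2 \<longrightarrow>
      (\<exists>\<phi>. is_multiplier H ip \<phi> \<and> mult_norm H ip \<phi> \<le> 1 \<and> \<phi> x = complex_of_real \<epsilon> \<and> \<phi> y = 0)"
    using assms(1) unfolding multiplier_separation_def by blast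
  have "\<epsilon> ^ card (S - {\<mu>}) \<le> dist_span ip (khat l ip \<mu>) (khat l ip) (S - {\<mu>})"
    if S: "S \<subseteq> range s" "finite S" and \<mu>: "\<mu> \<in> S" for S \<mu>
  proof (rule power_le_dist_span)
    fix \<nu> assume \<nu>: "\<nu> \<in> S - {\<mu>}"
    obtain i j where "\<mu> = s i" "\<nu> = s j"
      using \<mu> \<nu> S(1) by blast
    moreover from this have "i \<noteq> j"
      using \<nu> by blast
    ultimately have "dker l ip \<mu> \<nu> \<ge> \<delta>"
      using \<delta> by blast
    then have "dker l ip \<mu> \<nu> > \<delta> / 2"
      using \<open>\<delta> > 0\<close> by linarith
    then show "\<exists>\<phi>. is_multiplier H ip \<phi> \<and> mult_norm H ip \<phi> \<le> 1 \<and>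
        \<phi> \<mu> = complex_of_real \<epsilon> \<and> \<phi> \<nu> = 0"
      using \<epsilon>[rule_format, of \<mu> \<nu>] \<nu> by blast
  qed (use S(2) \<open>\<epsilon> > 0\<close> in auto)
  with \<open>\<epsilon> > 0\<close> show ?thesis
    by blast
qed

end

theorem proposition5p3:
  fixes l :: "'x \<Rightarrow> 'x \<Rightarrow> complex"
    and H :: "('x \<Rightarrow> complex) set"
    and ip :: "('x \<Rightarrow> complex) \<Rightarrow> ('x \<Rightarrow> complex) \<Rightarrow> complex"
  assumes "kernel l"
    and "is_rkhs l H ip"
    and "multiplier_separation l H ip"
  shows "automatic_separation l ip"
  unfolding automatic_separation_def n_weakly_separated_def
proof (intro allI impI)
  have "\<And>w. (\<lambda>x. l x w) \<noteq> (\<lambda>_. 0)"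
    using assms(1) unfolding kernel_def by blast
  then interpret rkhs l H ip
    using assms(2) by unfold_locales
  fix s :: "nat \<Rightarrow> 'x" and n :: nat
  assume "weakly_separated l ip s"
  then obtain \<epsilon> where "\<epsilon> > 0" and \<epsilon>: "\<forall>S \<mu>. S \<subseteq> range s \<and> finite S \<and> \<mu> \<in> S \<longrightarrow>
      \<epsilon> ^ card (S - {\<mu>}) \<le> dist_span ip (khat l ip \<mu>) (khat l ip) (S - {\<mu>})"
    using weakly_separated_power_le_dist_span[OF assms(3)] by blast
  show "\<exists>\<epsilon>>0. \<forall>S. S \<subseteq> range s \<and> finite S \<and> card S = n \<longrightarrow>
      (\<forall>\<mu>\<in>S. dist_span ip (khat l ip \<mu>) (khat l ip) (S - {\<mu>}) \<ge> \<epsilon>)"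
  proof (intro exI[of _ "\<epsilon> ^ (n - 1)"] conjI allI impI ballI)
    show "\<epsilon> ^ (n - 1) > 0"
      using \<open>\<epsilon> > 0\<close> by simp
  next
    fix S \<mu> assume "S \<subseteq> range s \<and> finite S \<and> card S = n" "\<mu> \<in> S"
    then show "\<epsilon> ^ (n - 1) \<le> dist_span ip (khat l ip \<mu>) (khat l ip) (S - {\<mu>})"
      using \<epsilon> by auto
  qed
qed

end
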